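(* For every integer $D\ge 1$ there exists $n_0$ such that for all $n\ge n_0$ the following holds. If $\Gamma$ is a graph that contains as a subgraph every $D$-degenerate graph on $n$ vertices with maximum degree at most $2D+1$, then \[e(\Gamma)\ge \tfrac{1}{1000D}\,n^{2-1/D}.\]
   Context: A graph $H$ is $D$-degenerate if every induced subgraph of $H$ has a vertex of degree at most $D$; equivalently, there is an ordering $v_1,\dots,v_n$ of $V(H)$ such that each $v_i$ has at most $D$ neighbours among $v_1,\dots,v_{i-1}$. $e(\Gamma)$ denotes the number of edges of $\Gamma$. *)

theory Defs
  imports Complex_Main
begin

definition simple_graph :: "'a set \<Rightarrow> 'a set set \<Rightarrow> bool" where
  "simple_graph V E \<longleftrightarrow> finite V \<and> (\<forall>e\<in>E. \<exists>u v. u \<in> V \<and> v \<in> V \<and> u \<noteq> v \<and> e = {u, v})"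

definition num_edges :: "'a set set \<Rightarrow> nat" where
  "num_edges E = card E"

definition deg_in :: "'a set \<Rightarrow> 'a set set \<Rightarrow> 'a \<Rightarrow> nat" where
  "deg_in S E v = card {u \<in> S. {u, v} \<in> E}"

definition degenerate :: "nat \<Rightarrow> 'a set \<Rightarrow> 'a set set \<Rightarrow> bool" where
  "degenerate D V E \<longleftrightarrow> (\<forall>S. S \<subseteq> V \<and> S \<noteq> {} \<longrightarrow> (\<exists>v\<in>S. deg_in S E v \<le> D))"

definition max_degree_le :: "nat \<Rightarrow> 'a set \<Rightarrow> 'a set set \<Rightarrow> bool" where
  "max_degree_le k V E \<longleftrightarrow> (\<forall>v\<in>V. deg_in V E v \<le> k)"

definition contains_subgraph :: "'b set \<Rightarrow> 'b set set \<Rightarrow> 'a set \<Rightarrow> 'a set set \<Rightarrow> bool" where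
  "contains_subgraph V2 E2 V1 E1 \<longleftrightarrow>
     (\<exists>f. inj_on f V1 \<and> f ` V1 \<subseteq> V2 \<and> (\<forall>e\<in>E1. f ` e \<in> E2))"

end

theory Submission
  imports Defs "HOL-Combinatorics.Permutations" "HOL-Real_Asymp.Real_Asymp"
begin

(*
  The bound comes from counting. Fix c, T >= 1 and take vertices in layers 0, ..., T, layer j having
  c D^(T-j) (D+1)^j vertices. For j < T cut layer j + 1 into D + 1 blocks and layer j into D blocks, all of
  size x_j = c D^(T-1-j) (D+1)^j, and join each of the D (D+1) pairs of blocks by a perfect matching.
  Every vertex then has D + 1 neighbours in the layer above and D in the layer below, so the resulting
  graphs are D-degenerate (a vertex in the highest layer of a subgraph has degree at most D there) with
  maximum degree 2D + 1, and the prod_j (x_j!)^(D(D+1)) choices of matchings give distinct graphs, all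
  with the same number k of edges on the same N vertices. A host with m edges containing all of them
  contains at most (m choose k) N^N of them, as a copy is determined by its edges in the host together
  with the inverse of the embedding. Choosing (D+1)^T close to sqrt n and c = n div ((D+1)^(T+1) - D^(T+1)),
  so that N is close to n, and comparing logarithms, using ln x! >= x ln x - x, gives
  m >= n^(2 - 1/D) / (1000 D).
*)

definition degenerate_universal :: "nat \<Rightarrow> nat \<Rightarrow> 'a set \<Rightarrow> 'a set set \<Rightarrow> bool" where
  "degenerate_universal D n V E \<longleftrightarrow> (\<forall>EH :: nat set set. simple_graph {0..<n} EH \<and> degenerate D {0..<n} EH
      \<and> max_degree_le (2 * D + 1) {0..<n} EH \<longrightarrow> contains_subgraph V E {0..<n} EH)"

section \<open>Analytic estimates\<close>

lemma power_div_fact_le_exp: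
  fixes x :: real
  assumes "x \<ge> 0"
  shows "x ^ n / fact n \<le> exp x"
proof -
  have "x ^ n / fact n = (\<Sum>k\<in>{n}. x ^ k /\<^sub>R fact k)"
    by (simp add: divide_inverse mult.commute)
  also have "\<dots> \<le> exp x"
    using exp_converges[of x] assms
    by (intro sum_le_suminf[THEN order_trans]) (auto simp: sums_iff)
  finally show ?thesis .
qed

lemma ln_fact_ge: "real n * ln (real n) - real n \<le> ln (fact n)"
proof (cases "n = 0")
  case False
  then have "real n ^ n \<le> exp (real n) * fact n"
    using power_div_fact_le_exp[of "real n" n] by (simp add: field_simps)
  then have "ln (real n ^ n) \<le> ln (exp (real n) * fact n)"
    using False by simp
  then show ?thesis
    using False by (simp add: ln_mult ln_realpow)
qed simp

lemma weighted_geometric_sum: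
  fixes d :: real
  shows "(\<Sum>i<T. real i * d ^ i * (d + 1) ^ (T - Suc i)) + d ^ T * (real T + d) = d * (d + 1) ^ T"
proof (induction T)
  case (Suc T)
  have "(\<Sum>i<T. real i * d ^ i * (d + 1) ^ (T - i))
      = (d + 1) * (\<Sum>i<T. real i * d ^ i * (d + 1) ^ (T - Suc i))"
    unfolding sum_distrib_left
  proof (intro sum.cong refl)
    fix i assume "i \<in> {..<T}"
    then have "T - i = Suc (T - Suc i)" by simp
    then show "real i * d ^ i * (d + 1) ^ (T - i) = (d + 1) * (real i * d ^ i * (d + 1) ^ (T - Suc i))"
      by simp
  qed
  then have "(\<Sum>i<Suc T. real i * d ^ i * (d + 1) ^ (Suc T - Suc i)) + d ^ Suc T * (real (Suc T) + d)
      = (d + 1) * ((\<Sum>i<T. real i * d ^ i * (d + 1) ^ (T - Suc i)) + d ^ T * (real T + d))"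
    by (simp add: algebra_simps)
  then show ?case
    using Suc.IH by simp
qed simp

section \<open>Counting graphs that embed into a host\<close>

lemma image_inv_into_image_edges:
  assumes "inj_on g S" and "G \<subseteq> Pow S"
  shows "(`) (inv_into S g) ` (`) g ` G = G"
proof -
  have "(`) (inv_into S g) ` (`) g ` G = (\<lambda>e. e) ` G"
    unfolding image_comp
  proof (intro image_cong refl)
    fix e assume "e \<in> G"
    then have "e \<subseteq> S"
      using assms(2) by blast
    then show "((`) (inv_into S g) \<circ> (`) g) e = e"
      using assms(1) by (simp add: inv_into_image_cancel)
  qed
  then show ?thesis
    by simp
qed

lemma card_edge_codes_le:
  fixes E :: "'w set set" and S :: "'v set" and k :: nat
  assumes S: "finite S" and E: "finite E"
  defines "\<F> \<equiv> {F. F \<subseteq> E \<and> card F = k \<and> finite (\<Union>F) \<and> card (\<Union>F) \<le> card S}"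
  shows "finite (Sigma \<F> (\<lambda>F. \<Union>F \<rightarrow>\<^sub>E S))"
    and "card (Sigma \<F> (\<lambda>F. \<Union>F \<rightarrow>\<^sub>E S)) \<le> (card E choose k) * card S ^ card S"
proof -
  have "finite \<F>"
    using E by (auto simp: \<F>_def intro: finite_subset[of _ "Pow E"])
  then show "finite (Sigma \<F> (\<lambda>F. \<Union>F \<rightarrow>\<^sub>E S))"
    using S by (intro finite_SigmaI finite_PiE) (auto simp: \<F>_def)
  have "card (Sigma \<F> (\<lambda>F. \<Union>F \<rightarrow>\<^sub>E S)) = (\<Sum>F\<in>\<F>. card S ^ card (\<Union>F))"
    using S \<open>finite \<F>\<close> by (subst card_SigmaI) (auto simp: \<F>_def card_PiE intro!: finite_PiE)
  also have "\<dots> \<le> card \<F> * card S ^ card S"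
  proof (intro sum_bounded_above[where 'a = nat, simplified])
    fix F assume "F \<in> \<F>"
    then show "card S ^ card (\<Union>F) \<le> card S ^ card S"
      by (cases "card S = 0") (auto simp: \<F>_def intro: power_increasing)
  qed
  also have "card \<F> \<le> card E choose k"
    using E by (subst n_subsets[OF E, symmetric]) (auto simp: \<F>_def intro: card_mono)
  finally show "card (Sigma \<F> (\<lambda>F. \<Union>F \<rightarrow>\<^sub>E S)) \<le> (card E choose k) * card S ^ card S"
    by (simp add: mult_right_mono)
qed

lemma edge_code_mem:
  assumes S: "finite S" and g: "inj_on g S" and G: "G \<subseteq> Pow S" "card G = k"
    and edges: "\<forall>e\<in>G. g ` e \<in> E"
  shows "((`) g ` G, restrict (inv_into S g) (\<Union>((`) g ` G)))
    \<in> Sigma {F. F \<subseteq> E \<and> card F = k \<and> finite (\<Union>F) \<and> card (\<Union>F) \<le> card S} (\<lambda>F. \<Union>F \<rightarrow>\<^sub>E S)"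
proof -
  have U: "\<Union>((`) g ` G) \<subseteq> g ` S"
    using G by blast
  then have "finite (\<Union>((`) g ` G)) \<and> card (\<Union>((`) g ` G)) \<le> card S"
    using S card_image_le[OF S, of g] by (meson card_mono finite_imageI finite_subset order_trans)
  moreover have "card ((`) g ` G) = k"
    using G inj_on_subset[OF inj_on_image_Pow[OF g]] by (simp add: card_image)
  moreover have "restrict (inv_into S g) (\<Union>((`) g ` G)) \<in> \<Union>((`) g ` G) \<rightarrow>\<^sub>E S"
    unfolding restrict_PiE_iff using U by (meson inv_into_into subsetD)
  moreover have "(`) g ` G \<subseteq> E"
    using edges by blast
  ultimately show ?thesis
    by simp
qed

lemma card_embeddable_family_le:
  fixes \<G> :: "'v set set set" and E :: "'w set set"
  assumes S: "finite S" and E: "finite E"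
    and \<G>: "\<And>G. G \<in> \<G> \<Longrightarrow> G \<subseteq> Pow S \<and> card G = k"
    and embeds: "\<And>G. G \<in> \<G> \<Longrightarrow> \<exists>g. inj_on g S \<and> (\<forall>e\<in>G. g ` e \<in> E)"
  shows "card \<G> \<le> (card E choose k) * card S ^ card S"
proof -
  obtain emb where emb: "\<And>G. G \<in> \<G> \<Longrightarrow> inj_on (emb G) S \<and> (\<forall>e\<in>G. emb G ` e \<in> E)"
    using embeds by metis
  \<comment> \<open>a graph is encoded by the image of its edges and the inverse of its embedding\<close>
  define code where
    "code G = ((`) (emb G) ` G, restrict (inv_into S (emb G)) (\<Union>((`) (emb G) ` G)))" for G
  have "inj_on code \<G>"
  proof (rule inj_onI)
    have restrict_Union: "(`) (restrict h (\<Union>F)) ` F = (`) h ` F" for h :: "'w \<Rightarrow> 'v" and F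
      by (intro image_cong refl) auto
    have decode: "(`) (snd (code G)) ` fst (code G) = G" if "G \<in> \<G>" for G
      unfolding code_def fst_conv snd_conv restrict_Union
      using emb[OF that] \<G>[OF that] by (intro image_inv_into_image_edges) auto
    fix G G' assume "G \<in> \<G>" "G' \<in> \<G>" "code G = code G'"
    then show "G = G'"
      using decode by metis
  qed
  moreover have "code ` \<G> \<subseteq> Sigma {F. F \<subseteq> E \<and> card F = k \<and> finite (\<Union>F) \<and> card (\<Union>F) \<le> card S}
      (\<lambda>F. \<Union>F \<rightarrow>\<^sub>E S)"
  proof (rule image_subsetI)
    fix G assume G: "G \<in> \<G>"
    then show "code G \<in> Sigma {F. F \<subseteq> E \<and> card F = k \<and> finite (\<Union>F) \<and> card (\<Union>F) \<le> card S}
        (\<lambda>F. \<Union>F \<rightarrow>\<^sub>E S)"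
      unfolding code_def using emb[OF G] \<G>[OF G] by (intro edge_code_mem[OF S]) auto
  qed
  ultimately show ?thesis
    using card_edge_codes_le[OF S E, of k] by (meson card_inj_on_le order_trans)
qed

section \<open>Relabelling graphs\<close>

lemma simple_graph_finite_edges:
  assumes "simple_graph V E"
  shows "finite E"
proof (rule finite_subset)
  show "E \<subseteq> Pow V"
    using assms by (auto simp: simple_graph_def)
  show "finite (Pow V)"
    using assms by (simp add: simple_graph_def)
qed

lemma image_edgeE:
  assumes "simple_graph S G" and "{u, w} \<in> (`) h ` G"
  obtains y v where "y \<in> S" "v \<in> S" "u = h y" "w = h v" "{y, v} \<in> G"
proof -
  obtain y v where "y \<in> S" "v \<in> S" "{y, v} \<in> G" "{u, w} = {h y, h v}"
    using assms by (auto simp: simple_graph_def)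
  then have "(u = h y \<and> w = h v) \<or> (u = h v \<and> w = h y)"
    by (simp add: doubleton_eq_iff)
  then show ?thesis
    using that \<open>y \<in> S\<close> \<open>v \<in> S\<close> \<open>{y, v} \<in> G\<close> by (metis insert_commute)
qed

lemma simple_graph_image:
  assumes "simple_graph S G" and "inj_on h S" and "h ` S \<subseteq> W" and "finite W"
  shows "simple_graph W ((`) h ` G)"
  unfolding simple_graph_def
proof (intro conjI ballI)
  fix e assume "e \<in> (`) h ` G"
  then obtain y v where "y \<in> S" "v \<in> S" "y \<noteq> v" "e = {h y, h v}"
    using assms(1) by (auto simp: simple_graph_def)
  then show "\<exists>u w. u \<in> W \<and> w \<in> W \<and> u \<noteq> w \<and> e = {u, w}"
    using assms(2,3) by (intro exI[of _ "h y"] exI[of _ "h v"]) (auto simp: inj_on_def)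
qed (fact assms(4))

lemma deg_in_image:
  assumes G: "simple_graph S G" and h: "inj_on h S" and v: "v \<in> S"
  shows "deg_in A ((`) h ` G) (h v) = deg_in (S \<inter> h -` A) G v"
proof -
  have "{u \<in> A. {u, h v} \<in> (`) h ` G} = h ` {y \<in> S \<inter> h -` A. {y, v} \<in> G}"
  proof (intro equalityI subsetI)
    fix u assume u: "u \<in> {u \<in> A. {u, h v} \<in> (`) h ` G}"
    then have "{u, h v} \<in> (`) h ` G"
      by simp
    then obtain y v' where "y \<in> S" "v' \<in> S" "u = h y" "h v = h v'" "{y, v'} \<in> G"
      by (rule image_edgeE[OF G])
    moreover from this have "v' = v"
      using h v by (metis inj_onD)
    ultimately show "u \<in> h ` {y \<in> S \<inter> h -` A. {y, v} \<in> G}"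
      using u by blast
  next
    fix u assume "u \<in> h ` {y \<in> S \<inter> h -` A. {y, v} \<in> G}"
    then obtain y where "y \<in> S" "h y \<in> A" "{y, v} \<in> G" "u = h y"
      by blast
    moreover from this have "{u, h v} \<in> (`) h ` G"
      by (intro image_eqI[of _ _ "{y, v}"]) simp_all
    ultimately show "u \<in> {u \<in> A. {u, h v} \<in> (`) h ` G}"
      by simp
  qed
  moreover have "inj_on h {y \<in> S \<inter> h -` A. {y, v} \<in> G}"
    using h by (auto intro: inj_on_subset)
  ultimately show ?thesis
    by (simp add: deg_in_def card_image)
qed

lemma deg_in_image_outside:
  assumes "simple_graph S G" and "w \<notin> h ` S"
  shows "deg_in A ((`) h ` G) w = 0"
proof -
  have "{u, w} \<notin> (`) h ` G" for u
  proof
    assume "{u, w} \<in> (`) h ` G"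
    then obtain y v where "v \<in> S" "w = h v"
      by (rule image_edgeE[OF assms(1)])
    with assms(2) show False
      by blast
  qed
  then show ?thesis
    by (simp add: deg_in_def)
qed

lemma degenerate_image:
  assumes G: "simple_graph S G" and h: "inj_on h S" and deg: "degenerate D S G"
  shows "degenerate D W ((`) h ` G)"
  unfolding degenerate_def
proof (intro allI impI)
  fix A assume A: "A \<subseteq> W \<and> A \<noteq> {}"
  show "\<exists>w\<in>A. deg_in A ((`) h ` G) w \<le> D"
  proof (cases "S \<inter> h -` A = {}")
    case True
    obtain w where "w \<in> A"
      using A by blast
    moreover from this True have "w \<notin> h ` S"
      by blast
    ultimately show ?thesis
      using deg_in_image_outside[OF G, of w h A] by (intro bexI[of _ w]) simp_all
  next
    case False
    then have "S \<inter> h -` A \<subseteq> S \<and> S \<inter> h -` A \<noteq> {}"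
      by simp
    then obtain v where v: "v \<in> S \<inter> h -` A" "deg_in (S \<inter> h -` A) G v \<le> D"
      using deg[unfolded degenerate_def, rule_format] by meson
    then have "deg_in A ((`) h ` G) (h v) \<le> D"
      using deg_in_image[OF G h] by simp
    with v(1) show ?thesis
      by blast
  qed
qed

lemma max_degree_le_image:
  assumes G: "simple_graph S G" and h: "inj_on h S" and deg: "max_degree_le K S G"
  shows "max_degree_le K W ((`) h ` G)"
  unfolding max_degree_le_def
proof
  fix w assume "w \<in> W"
  show "deg_in W ((`) h ` G) w \<le> K"
  proof (cases "w \<in> h ` S")
    case True
    then obtain v where v: "v \<in> S" "w = h v"
      by blast
    have "deg_in W ((`) h ` G) w = deg_in (S \<inter> h -` W) G v"
      using deg_in_image[OF G h v(1)] v(2) by simp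
    also have "\<dots> \<le> deg_in S G v"
      using G unfolding deg_in_def simple_graph_def by (intro card_mono) auto
    also have "\<dots> \<le> K"
      using deg v(1) by (simp add: max_degree_le_def)
    finally show ?thesis .
  qed (simp add: deg_in_image_outside[OF G])
qed

section \<open>Layered graphs\<close>

lemma mult_add_less_mult:
  fixes a r x K :: nat
  assumes "r < x" and "a < K"
  shows "a * x + r < K * x"
  using assms mult_le_mono1[of "Suc a" K x] by simp

lemma mult_add_eq_mult_add_iff:
  fixes a a' r r' x :: nat
  assumes "r < x" and "r' < x"
  shows "a * x + r = a' * x + r' \<longleftrightarrow> a = a' \<and> r = r'"
proof
  assume eq: "a * x + r = a' * x + r'"
  show "a = a' \<and> r = r'"
    using arg_cong[OF eq, of "\<lambda>p. p div x"] arg_cong[OF eq, of "\<lambda>p. p mod x"] assms by simp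
qed simp

definition layered_order :: "nat \<Rightarrow> nat \<Rightarrow> nat" where
  "layered_order D T = (\<Sum>j\<le>T. D ^ (T - j) * (D + 1) ^ j)"

lemma layered_order_add_power: "layered_order D T + D ^ Suc T = (D + 1) ^ Suc T"
proof -
  have "(real D + 1) ^ Suc T - real D ^ Suc T = (\<Sum>i<Suc T. real D ^ (Suc T - Suc i) * (real D + 1) ^ i)"
    using power_diff_sumr2[of "real D + 1" "Suc T" "real D"] by simp
  also have "\<dots> = real (layered_order D T)"
    by (simp add: layered_order_def lessThan_Suc_atMost add.commute)
  finally have "real (layered_order D T) + real D ^ Suc T = (real D + 1) ^ Suc T"
    by linarith
  then have "real (layered_order D T + D ^ Suc T) = real ((D + 1) ^ Suc T)"
    by (simp only: of_nat_add of_nat_power of_nat_1)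
  then show ?thesis
    by (simp only: of_nat_eq_iff)
qed

lemma layered_order_ge: "(D + 1) ^ T \<le> layered_order D T"
proof -
  have "D ^ (T - T) * (D + 1) ^ T \<le> (\<Sum>j\<le>T. D ^ (T - j) * (D + 1) ^ j)"
    by (rule member_le_sum) auto
  then show ?thesis
    by (simp add: layered_order_def)
qed

(*
  Vertex (j, p) is position p of layer j. For j < T, block a of layer j + 1 (a <= D) and block b of
  layer j (b < D) consist of the positions a * block_size j + r and b * block_size j + r, r < block_size j,
  and sigma (j, a, b) is the perfect matching between them; the edge slot ((j, a, b), r) is its edge at
  offset r.
*)
locale layered_graph =
  fixes D T c :: nat
begin

definition block_size :: "nat \<Rightarrow> nat" where
  "block_size j = c * D ^ (T - Suc j) * (D + 1) ^ j"

definition layer_size :: "nat \<Rightarrow> nat" where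
  "layer_size j = c * D ^ (T - j) * (D + 1) ^ j"

definition verts :: "(nat \<times> nat) set" where
  "verts = (SIGMA j:{..T}. {..<layer_size j})"

definition block_pairs :: "(nat \<times> nat \<times> nat) set" where
  "block_pairs = {..<T} \<times> {..D} \<times> {..<D}"

definition edge_slots :: "((nat \<times> nat \<times> nat) \<times> nat) set" where
  "edge_slots = (SIGMA i:block_pairs. {..<block_size (fst i)})"

definition matchings :: "(nat \<times> nat \<times> nat \<Rightarrow> nat \<Rightarrow> nat) set" where
  "matchings = (\<Pi>\<^sub>E i\<in>block_pairs. {\<sigma>. \<sigma> permutes {..<block_size (fst i)}})"

fun matching_edge :: "(nat \<times> nat \<times> nat \<Rightarrow> nat \<Rightarrow> nat) \<Rightarrow> (nat \<times> nat \<times> nat) \<times> nat \<Rightarrow> (nat \<times> nat) set"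
  where "matching_edge \<sigma> ((j, a, b), r) =
    {(Suc j, a * block_size j + r), (j, b * block_size j + \<sigma> (j, a, b) r)}"

definition layered_edges :: "(nat \<times> nat \<times> nat \<Rightarrow> nat \<Rightarrow> nat) \<Rightarrow> (nat \<times> nat) set set" where
  "layered_edges \<sigma> = matching_edge \<sigma> ` edge_slots"

lemma block_pairs_iff: "(j, a, b) \<in> block_pairs \<longleftrightarrow> j < T \<and> a \<le> D \<and> b < D"
  by (auto simp: block_pairs_def)

lemma edge_slots_iff: "((j, a, b), r) \<in> edge_slots \<longleftrightarrow> (j, a, b) \<in> block_pairs \<and> r < block_size j"
  by (simp add: edge_slots_def)

lemma layer_size_eq:
  assumes "j < T"
  shows "layer_size j = D * block_size j" and "layer_size (Suc j) = (D + 1) * block_size j"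
proof -
  from assms have "T - j = Suc (T - Suc j)"
    by simp
  then show "layer_size j = D * block_size j" "layer_size (Suc j) = (D + 1) * block_size j"
    by (simp_all add: layer_size_def block_size_def algebra_simps)
qed

lemma matching_permutes:
  assumes "\<sigma> \<in> matchings" and "(j, a, b) \<in> block_pairs"
  shows "\<sigma> (j, a, b) permutes {..<block_size j}"
  using PiE_mem[OF assms(1)[unfolded matchings_def] assms(2)] by simp

lemma matching_less:
  assumes "\<sigma> \<in> matchings" and "((j, a, b), r) \<in> edge_slots"
  shows "\<sigma> (j, a, b) r < block_size j"
  using assms permutes_in_image[OF matching_permutes[OF assms(1)]] by (simp add: edge_slots_iff)

lemma layered_edgeE:
  assumes "e \<in> layered_edges \<sigma>"
  obtains j a b r where "((j, a, b), r) \<in> edge_slots" and "e = matching_edge \<sigma> ((j, a, b), r)"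
proof -
  obtain q where "q \<in> edge_slots" "e = matching_edge \<sigma> q"
    using assms unfolding layered_edges_def by blast
  moreover obtain j a b r where "q = ((j, a, b), r)"
    by (metis prod.collapse)
  ultimately show ?thesis
    using that by blast
qed

lemma layered_edge_iff:
  "{(Suc j, p'), (j, p)} \<in> layered_edges \<sigma> \<longleftrightarrow>
    (\<exists>a b r. ((j, a, b), r) \<in> edge_slots \<and> p' = a * block_size j + r \<and> p = b * block_size j + \<sigma> (j, a, b) r)"
proof
  assume "{(Suc j, p'), (j, p)} \<in> layered_edges \<sigma>"
  then obtain j' a b r where slot: "((j', a, b), r) \<in> edge_slots"
    and "{(Suc j, p'), (j, p)} = {(Suc j', a * block_size j' + r), (j', b * block_size j' + \<sigma> (j', a, b) r)}"
    by (metis layered_edgeE matching_edge.simps)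
  then have "j' = j" "p' = a * block_size j + r" "p = b * block_size j + \<sigma> (j, a, b) r"
    by (auto simp: doubleton_eq_iff)
  with slot show "\<exists>a b r. ((j, a, b), r) \<in> edge_slots \<and> p' = a * block_size j + r \<and> p = b * block_size j + \<sigma> (j, a, b) r"
    by blast
next
  assume "\<exists>a b r. ((j, a, b), r) \<in> edge_slots \<and> p' = a * block_size j + r \<and> p = b * block_size j + \<sigma> (j, a, b) r"
  then obtain a b r where "((j, a, b), r) \<in> edge_slots" "{(Suc j, p'), (j, p)} = matching_edge \<sigma> ((j, a, b), r)"
    by auto
  then show "{(Suc j, p'), (j, p)} \<in> layered_edges \<sigma>"
    unfolding layered_edges_def by (metis image_eqI)
qed

lemma finite_verts: "finite verts"
  by (simp add: verts_def)

lemma layered_edges_simple: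
  assumes "\<sigma> \<in> matchings"
  shows "simple_graph verts (layered_edges \<sigma>)"
  unfolding simple_graph_def
proof (intro conjI ballI finite_verts)
  fix e assume "e \<in> layered_edges \<sigma>"
  then obtain j a b r where slot: "((j, a, b), r) \<in> edge_slots" and e: "e = matching_edge \<sigma> ((j, a, b), r)"
    by (rule layered_edgeE)
  then have "j < T" "a < D + 1" "b < D" "r < block_size j" "\<sigma> (j, a, b) r < block_size j"
    using matching_less[OF assms] by (auto simp: edge_slots_iff block_pairs_iff)
  then have "a * block_size j + r < layer_size (Suc j)" "b * block_size j + \<sigma> (j, a, b) r < layer_size j"
    unfolding layer_size_eq[OF \<open>j < T\<close>] by (simp_all only: mult_add_less_mult)
  then have "(Suc j, a * block_size j + r) \<in> verts" "(j, b * block_size j + \<sigma> (j, a, b) r) \<in> verts"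
    using \<open>j < T\<close> by (auto simp: verts_def)
  then show "\<exists>u v. u \<in> verts \<and> v \<in> verts \<and> u \<noteq> v \<and> e = {u, v}"
    using e by (intro exI conjI) auto
qed

lemma layered_edge_layers:
  assumes "{u, v} \<in> layered_edges \<sigma>"
  shows "fst u = Suc (fst v) \<or> fst v = Suc (fst u)"
proof -
  obtain j a b r where "{u, v} = matching_edge \<sigma> ((j, a, b), r)"
    using assms by (rule layered_edgeE)
  then show ?thesis
    by (auto simp: doubleton_eq_iff)
qed

lemma card_upper_nbrs_le:
  assumes \<sigma>: "\<sigma> \<in> matchings"
  shows "card {u \<in> A. {u, v} \<in> layered_edges \<sigma> \<and> fst u = Suc (fst v)} \<le> D + 1"
proof -
  obtain j p where v: "v = (j, p)"
    by fastforce
  define U where "U = {u \<in> A. {u, v} \<in> layered_edges \<sigma> \<and> fst u = Suc (fst v)}"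
  have decode: "\<exists>a b r. ((j, a, b), r) \<in> edge_slots \<and> u = (Suc j, a * block_size j + r)
      \<and> p = b * block_size j + \<sigma> (j, a, b) r" if "u \<in> U" for u
    using that layered_edge_iff[of j "snd u" p \<sigma>] by (cases u) (auto simp: U_def v)
  \<comment> \<open>an upper neighbour is determined by the block it lies in\<close>
  have "inj_on (\<lambda>u. snd u div block_size j) U"
  proof (rule inj_onI)
    fix u u' assume "u \<in> U" "u' \<in> U" and eq: "snd u div block_size j = snd u' div block_size j"
    then obtain a b r a' b' r' where slot: "((j, a, b), r) \<in> edge_slots" "((j, a', b'), r') \<in> edge_slots"
      and u: "u = (Suc j, a * block_size j + r)" "u' = (Suc j, a' * block_size j + r')"
      and p: "p = b * block_size j + \<sigma> (j, a, b) r" "p = b' * block_size j + \<sigma> (j, a', b') r'"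
      using decode by meson
    have less: "r < block_size j" "r' < block_size j"
      "\<sigma> (j, a, b) r < block_size j" "\<sigma> (j, a', b') r' < block_size j"
      using slot matching_less[OF \<sigma>] by (simp_all add: edge_slots_iff)
    have "a = a'"
      using eq u less by simp
    moreover have "b = b'" "\<sigma> (j, a, b) r = \<sigma> (j, a', b') r'"
      using mult_add_eq_mult_add_iff[OF less(3,4), of b b'] p by simp_all
    moreover have "inj (\<sigma> (j, a, b))"
      using slot(1) by (intro permutes_inj[OF matching_permutes[OF \<sigma>]]) (simp add: edge_slots_iff)
    ultimately have "r = r'"
      by (simp add: inj_eq)
    then show "u = u'"
      using u \<open>a = a'\<close> by simp
  qed
  moreover have "(\<lambda>u. snd u div block_size j) ` U \<subseteq> {..D}"
    using decode by (fastforce simp: edge_slots_iff block_pairs_iff)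
  ultimately have "card U \<le> card {..D}"
    by (intro card_inj_on_le) auto
  then show ?thesis
    by (simp add: U_def)
qed

lemma card_lower_nbrs_le:
  assumes \<sigma>: "\<sigma> \<in> matchings"
  shows "card {u \<in> A. {u, v} \<in> layered_edges \<sigma> \<and> Suc (fst u) = fst v} \<le> D"
proof (cases "fst v")
  case 0
  then show ?thesis
    by simp
next
  case (Suc j)
  then obtain p where v: "v = (Suc j, p)"
    by (metis prod.collapse)
  define U where "U = {u \<in> A. {u, v} \<in> layered_edges \<sigma> \<and> Suc (fst u) = fst v}"
  have decode: "\<exists>a b r. ((j, a, b), r) \<in> edge_slots \<and> p = a * block_size j + r
      \<and> u = (j, b * block_size j + \<sigma> (j, a, b) r)" if "u \<in> U" for u
    using that layered_edge_iff[of j p "snd u" \<sigma>] by (cases u) (auto simp: U_def v insert_commute)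
  have "inj_on (\<lambda>u. snd u div block_size j) U"
  proof (rule inj_onI)
    fix u u' assume "u \<in> U" "u' \<in> U" and eq: "snd u div block_size j = snd u' div block_size j"
    then obtain a b r a' b' r' where slot: "((j, a, b), r) \<in> edge_slots" "((j, a', b'), r') \<in> edge_slots"
      and p: "p = a * block_size j + r" "p = a' * block_size j + r'"
      and u: "u = (j, b * block_size j + \<sigma> (j, a, b) r)" "u' = (j, b' * block_size j + \<sigma> (j, a', b') r')"
      using decode by meson
    have less: "r < block_size j" "r' < block_size j"
      "\<sigma> (j, a, b) r < block_size j" "\<sigma> (j, a', b') r' < block_size j"
      using slot matching_less[OF \<sigma>] by (simp_all add: edge_slots_iff)
    have "a = a'" "r = r'"
      using mult_add_eq_mult_add_iff[OF less(1,2), of a a'] p by simp_all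
    moreover have "b = b'"
      using eq u less by simp
    ultimately show "u = u'"
      using u by simp
  qed
  moreover have "(\<lambda>u. snd u div block_size j) ` U \<subseteq> {..<D}"
    using decode matching_less[OF \<sigma>] by (fastforce simp: edge_slots_iff block_pairs_iff)
  ultimately have "card U \<le> card {..<D}"
    by (intro card_inj_on_le) auto
  then show ?thesis
    by (simp add: U_def)
qed

lemma layered_edges_degenerate:
  assumes \<sigma>: "\<sigma> \<in> matchings"
  shows "degenerate D verts (layered_edges \<sigma>)"
  unfolding degenerate_def
proof (intro allI impI)
  fix S assume S: "S \<subseteq> verts \<and> S \<noteq> {}"
  then have "finite S"
    using finite_verts finite_subset by blast
  \<comment> \<open>a vertex in the highest layer met by S has all its S-neighbours one layer below\<close>
  have "Max (fst ` S) \<in> fst ` S"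
    using \<open>finite S\<close> S by (intro Max_in) auto
  then obtain v where v: "v \<in> S" "fst v = Max (fst ` S)"
    by (rule imageE) simp
  have "{u \<in> S. {u, v} \<in> layered_edges \<sigma>} = {u \<in> S. {u, v} \<in> layered_edges \<sigma> \<and> Suc (fst u) = fst v}"
  proof (intro Collect_cong iffI conjI)
    fix u assume u: "u \<in> S \<and> {u, v} \<in> layered_edges \<sigma>"
    then have "fst u \<le> fst v"
      using Max_ge[OF finite_imageI[OF \<open>finite S\<close>], of "fst u" fst] v(2) by simp
    moreover have "fst u = Suc (fst v) \<or> fst v = Suc (fst u)"
      using u layered_edge_layers by blast
    ultimately show "Suc (fst u) = fst v"
      by linarith
  qed simp_all
  then have "deg_in S (layered_edges \<sigma>) v \<le> D"
    using card_lower_nbrs_le[OF \<sigma>, of S v] by (simp add: deg_in_def)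
  with v(1) show "\<exists>v\<in>S. deg_in S (layered_edges \<sigma>) v \<le> D"
    by blast
qed

lemma layered_edges_max_degree:
  assumes \<sigma>: "\<sigma> \<in> matchings"
  shows "max_degree_le (2 * D + 1) verts (layered_edges \<sigma>)"
  unfolding max_degree_le_def
proof
  fix v assume "v \<in> verts"
  let ?up = "{u \<in> verts. {u, v} \<in> layered_edges \<sigma> \<and> fst u = Suc (fst v)}"
  let ?down = "{u \<in> verts. {u, v} \<in> layered_edges \<sigma> \<and> Suc (fst u) = fst v}"
  have "{u \<in> verts. {u, v} \<in> layered_edges \<sigma>} = ?up \<union> ?down"
  proof (intro equalityI subsetI)
    fix u assume "u \<in> {u \<in> verts. {u, v} \<in> layered_edges \<sigma>}"
    moreover from this have "fst u = Suc (fst v) \<or> fst v = Suc (fst u)"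
      using layered_edge_layers by blast
    ultimately show "u \<in> ?up \<union> ?down"
      by auto
  qed auto
  then have "deg_in verts (layered_edges \<sigma>) v \<le> card ?up + card ?down"
    by (simp add: deg_in_def card_Un_le)
  also have "\<dots> \<le> 2 * D + 1"
    using card_upper_nbrs_le[OF \<sigma>, of verts v] card_lower_nbrs_le[OF \<sigma>, of verts v] by simp
  finally show "deg_in verts (layered_edges \<sigma>) v \<le> 2 * D + 1" .
qed

lemma matching_edge_eqD:
  assumes \<sigma>: "\<sigma> \<in> matchings" and \<tau>: "\<tau> \<in> matchings"
    and slots: "((j, a, b), r) \<in> edge_slots" "((j', a', b'), r') \<in> edge_slots"
    and eq: "matching_edge \<sigma> ((j, a, b), r) = matching_edge \<tau> ((j', a', b'), r')"
  shows "j = j'" "a = a'" "b = b'" "r = r'" "\<sigma> (j, a, b) r = \<tau> (j', a', b') r'"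
proof -
  have j: "j' = j" and up: "a * block_size j + r = a' * block_size j + r'"
    and down: "b * block_size j + \<sigma> (j, a, b) r = b' * block_size j + \<tau> (j', a', b') r'"
    using eq by (auto simp: doubleton_eq_iff)
  have less: "r < block_size j" "r' < block_size j"
    "\<sigma> (j, a, b) r < block_size j" "\<tau> (j', a', b') r' < block_size j"
    using slots matching_less[OF \<sigma> slots(1)] matching_less[OF \<tau> slots(2)] j
    by (auto simp: edge_slots_iff block_pairs_iff)
  have "a = a'" "r = r'"
    using mult_add_eq_mult_add_iff[OF less(1,2), of a a'] up by simp_all
  moreover have "b = b'" "\<sigma> (j, a, b) r = \<tau> (j', a', b') r'"
    using mult_add_eq_mult_add_iff[OF less(3,4), of b b'] down by simp_all
  ultimately show "j = j'" "a = a'" "b = b'" "r = r'" "\<sigma> (j, a, b) r = \<tau> (j', a', b') r'"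
    using j by simp_all
qed

lemma card_layered_edges:
  assumes \<sigma>: "\<sigma> \<in> matchings"
  shows "card (layered_edges \<sigma>) = card edge_slots"
  unfolding layered_edges_def
proof (rule card_image, rule inj_onI)
  fix q q' assume slots: "q \<in> edge_slots" "q' \<in> edge_slots"
    and eq: "matching_edge \<sigma> q = matching_edge \<sigma> q'"
  obtain j a b r j' a' b' r' where q: "q = ((j, a, b), r)" "q' = ((j', a', b'), r')"
    by (metis prod.collapse)
  show "q = q'"
    using matching_edge_eqD[OF \<sigma> \<sigma>, of j a b r j' a' b' r'] slots eq q by simp
qed

lemma inj_on_layered_edges: "inj_on layered_edges matchings"
proof (rule inj_onI, rule ext, rule ext)
  fix \<sigma> \<tau> and i :: "nat \<times> nat \<times> nat" and r :: nat
  assume \<sigma>: "\<sigma> \<in> matchings" and \<tau>: "\<tau> \<in> matchings" and eq: "layered_edges \<sigma> = layered_edges \<tau>"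
  obtain j a b where i: "i = (j, a, b)"
    by (rule prod_cases3)
  show "\<sigma> i r = \<tau> i r"
  proof (cases "((j, a, b), r) \<in> edge_slots")
    case True
    then have "matching_edge \<sigma> ((j, a, b), r) \<in> layered_edges \<sigma>"
      unfolding layered_edges_def by (rule imageI)
    then have "matching_edge \<sigma> ((j, a, b), r) \<in> layered_edges \<tau>"
      by (simp only: eq)
    then obtain j' a' b' r' where slot': "((j', a', b'), r') \<in> edge_slots"
      and eq': "matching_edge \<sigma> ((j, a, b), r) = matching_edge \<tau> ((j', a', b'), r')"
      by (rule layered_edgeE)
    show ?thesis
      using matching_edge_eqD[OF \<sigma> \<tau> True slot' eq'] i by simp
  next
    case False
    show ?thesis
    proof (cases "i \<in> block_pairs")
      case True
      then have "\<sigma> i permutes {..<block_size j}" "\<tau> i permutes {..<block_size j}"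
        using matching_permutes[OF \<sigma>] matching_permutes[OF \<tau>] i by simp_all
      moreover have "r \<notin> {..<block_size j}"
        using False True i by (simp add: edge_slots_iff)
      ultimately show ?thesis
        by (simp add: permutes_not_in)
    next
      case False
      then show ?thesis
        using PiE_arb[OF \<sigma>[unfolded matchings_def]] PiE_arb[OF \<tau>[unfolded matchings_def]] by simp
    qed
  qed
qed

lemma card_edge_slots: "card edge_slots = D * (D + 1) * (\<Sum>j<T. block_size j)"
proof -
  have "card edge_slots = (\<Sum>i\<in>block_pairs. block_size (fst i))"
    by (simp add: edge_slots_def block_pairs_def)
  also have "\<dots> = (\<Sum>j<T. \<Sum>_\<in>{..D} \<times> {..<D}. block_size j)"
    unfolding block_pairs_def by (subst sum.cartesian_product) (simp add: case_prod_beta)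
  finally show ?thesis
    by (simp add: sum_distrib_left)
qed

lemma card_matchings: "card matchings = (\<Prod>j<T. fact (block_size j) ^ (D * (D + 1)))"
proof -
  have "card matchings = (\<Prod>i\<in>block_pairs. fact (block_size (fst i)))"
    unfolding matchings_def by (simp add: card_PiE block_pairs_def card_permutations)
  also have "\<dots> = (\<Prod>j<T. \<Prod>_\<in>{..D} \<times> {..<D}. fact (block_size j))"
    unfolding block_pairs_def by (subst prod.cartesian_product) (simp add: case_prod_beta)
  finally show ?thesis
    by (simp add: mult.commute)
qed

lemma card_verts: "card verts = c * layered_order D T"
  by (simp add: verts_def layer_size_def layered_order_def sum_distrib_left mult.assoc)

lemma card_verts_eq_blocks: "card verts = layer_size 0 + (D + 1) * (\<Sum>j<T. block_size j)"
proof -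
  have "card verts = layer_size 0 + (\<Sum>j<T. layer_size (Suc j))"
    by (simp add: verts_def sum.atMost_shift)
  also have "(\<Sum>j<T. layer_size (Suc j)) = (D + 1) * (\<Sum>j<T. block_size j)"
    by (simp add: layer_size_eq sum_distrib_left)
  finally show ?thesis .
qed

lemma card_edge_slots_eq: "card edge_slots = D * (card verts - layer_size 0)"
  by (simp add: card_edge_slots card_verts_eq_blocks algebra_simps)

lemma card_matchings_le:
  assumes host: "simple_graph V E" and fits: "card verts \<le> n"
    and universal: "degenerate_universal D n V E"
  shows "card matchings \<le> (card E choose card edge_slots) * card verts ^ card verts"
proof -
  obtain h where "bij_betw h verts {0..<card verts}"
    using ex_bij_betw_finite_nat[OF finite_verts] by blast
  then have h: "inj_on h verts" and h_range: "h ` verts \<subseteq> {0..<n}"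
    using fits by (auto simp: bij_betw_def)
  have "\<exists>g. inj_on g verts \<and> (\<forall>e\<in>G. g ` e \<in> E)" if G: "G \<in> layered_edges ` matchings" for G
  proof -
    obtain \<sigma> where \<sigma>: "\<sigma> \<in> matchings" and G: "G = layered_edges \<sigma>"
      using G by blast
    note simple = layered_edges_simple[OF \<sigma>]
    have "contains_subgraph V E {0..<n} ((`) h ` G)"
      using universal[unfolded degenerate_universal_def] simple_graph_image[OF simple h h_range]
        degenerate_image[OF simple h layered_edges_degenerate[OF \<sigma>]]
        max_degree_le_image[OF simple h layered_edges_max_degree[OF \<sigma>]] G
      by blast
    then obtain f where f: "inj_on f {0..<n}" "\<forall>e\<in>(`) h ` G. f ` e \<in> E"
      unfolding contains_subgraph_def by blast
    have "inj_on (f \<circ> h) verts"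
      using h h_range f(1) by (auto intro: comp_inj_on inj_on_subset)
    moreover have "\<forall>e\<in>G. (f \<circ> h) ` e \<in> E"
      using f(2) by (simp add: image_comp)
    ultimately show ?thesis
      by blast
  qed
  moreover have "G \<subseteq> Pow verts \<and> card G = card edge_slots" if "G \<in> layered_edges ` matchings" for G
    using that layered_edges_simple card_layered_edges by (fastforce simp: simple_graph_def)
  ultimately have "card (layered_edges ` matchings) \<le> (card E choose card edge_slots) * card verts ^ card verts"
    by (intro card_embeddable_family_le finite_verts simple_graph_finite_edges[OF host]) blast+
  then show ?thesis
    by (simp add: card_image[OF inj_on_layered_edges])
qed

end

section \<open>The counting bound\<close>

locale sized_layered_graph = layered_graph +
  assumes D_pos: "D \<ge> 1" and T_pos: "T \<ge> 1" and c_pos: "c \<ge> 1"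
begin

lemma block_size_pos: "block_size j > 0"
  using D_pos c_pos by (simp add: block_size_def)

lemma sum_block_size_add_layer_size: "(\<Sum>j<T. block_size j) + layer_size 0 = c * (D + 1) ^ T"
proof -
  have T: "T = Suc (T - 1)"
    using T_pos by simp
  have "(\<Sum>j<T. block_size j) = c * layered_order D (T - 1)"
    unfolding block_size_def layered_order_def sum_distrib_left
    by (subst T, subst lessThan_Suc_atMost) (simp add: mult.assoc)
  moreover have "layered_order D (T - 1) + D ^ T = (D + 1) ^ T"
    using layered_order_add_power[of D "T - 1"] T by simp
  ultimately show ?thesis
    by (simp add: layer_size_def flip: distrib_left)
qed

lemma ln_block_size_ge:
  assumes "i < T"
  shows "ln (block_size (T - 1)) - i / D \<le> ln (block_size (T - Suc i))"
proof -
  define d where "d = real D"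
  have d: "d \<ge> 1"
    using D_pos by (simp add: d_def)
  have "block_size (T - Suc i) * (D + 1) ^ i = block_size (T - 1) * D ^ i"
    using assms by (simp add: block_size_def power_add[symmetric] algebra_simps)
  then have "real (block_size (T - Suc i)) * (d + 1) ^ i = real (block_size (T - 1)) * d ^ i"
    unfolding d_def by (metis of_nat_1 of_nat_add of_nat_mult of_nat_power)
  then have "ln (real (block_size (T - Suc i)) * (d + 1) ^ i) = ln (real (block_size (T - 1)) * d ^ i)"
    by simp
  then have "ln (block_size (T - Suc i)) + i * ln (d + 1) = ln (block_size (T - 1)) + i * ln d"
    using d block_size_pos by (simp add: ln_mult ln_realpow)
  moreover have "1 + 1 / d = (d + 1) / d"
    using d by (simp add: field_simps)
  then have "ln (d + 1) - ln d = ln (1 + 1 / d)"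
    using d by (simp add: ln_div)
  then have "ln (d + 1) - ln d \<le> 1 / d"
    using d ln_add_one_self_le_self[of "1 / d"] by simp
  then have "i * (ln (d + 1) - ln d) \<le> i / d"
    using mult_left_mono[of "ln (d + 1) - ln d" "1 / d" "real i"] by simp
  ultimately show ?thesis
    unfolding d_def by (simp add: algebra_simps)
qed

lemma weighted_sum_block_size_le:
  "(\<Sum>i<T. real i * block_size (T - Suc i)) \<le> real D * c * (real D + 1) ^ T"
proof -
  have "(\<Sum>i<T. real i * block_size (T - Suc i))
      = c * (\<Sum>i<T. real i * real D ^ i * (real D + 1) ^ (T - Suc i))"
    unfolding sum_distrib_left
  proof (intro sum.cong refl)
    fix i assume "i \<in> {..<T}"
    then have "T - Suc (T - Suc i) = i"
      by simp
    then show "real i * block_size (T - Suc i) = c * (real i * real D ^ i * (real D + 1) ^ (T - Suc i))"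
      by (simp add: block_size_def algebra_simps)
  qed
  also have "\<dots> \<le> c * (real D * (real D + 1) ^ T)"
  proof (rule mult_left_mono)
    have "0 \<le> real D ^ T * (real T + real D)"
      by simp
    then show "(\<Sum>i<T. real i * real D ^ i * (real D + 1) ^ (T - Suc i)) \<le> real D * (real D + 1) ^ T"
      using weighted_geometric_sum[of "real D" T] by linarith
  qed simp
  finally show ?thesis
    by (simp add: algebra_simps)
qed

lemma sum_ln_fact_block_size_ge:
  defines "K \<equiv> real (\<Sum>j<T. block_size j)" and "X \<equiv> real (block_size (T - 1))"
  shows "K * ln X - c * (real D + 1) ^ T - K \<le> (\<Sum>j<T. ln (fact (block_size j)))"
proof -
  define x where "x i = real (block_size (T - Suc i))" for i
  have reindex: "(\<Sum>j<T. f (block_size j)) = (\<Sum>i<T. f (block_size (T - Suc i)))" for f :: "nat \<Rightarrow> real"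
    by (rule sum.nat_diff_reindex[symmetric])
  note reindex_ln = reindex[of "\<lambda>b. ln (fact b)"] and reindex_real = reindex[of real]
  have "x i * ln X - x i * i / D - x i \<le> ln (fact (block_size (T - Suc i)))" if "i < T" for i
  proof -
    have "x i * (ln X - i / D) \<le> x i * ln (x i)"
      using ln_block_size_ge[OF that] by (intro mult_left_mono) (simp_all add: x_def X_def)
    then show ?thesis
      using ln_fact_ge[of "block_size (T - Suc i)"] by (simp add: x_def algebra_simps)
  qed
  then have "(\<Sum>i<T. x i * ln X - x i * i / D - x i) \<le> (\<Sum>j<T. ln (fact (block_size j)))"
    unfolding reindex_ln by (intro sum_mono) simp
  moreover have "(\<Sum>i<T. x i * ln X - x i * i / D - x i) = K * ln X - (\<Sum>i<T. real i * x i) / D - K"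
    using reindex_real
    by (simp add: K_def x_def sum_subtractf sum_distrib_left sum_distrib_right sum_divide_distrib mult.commute)
  moreover have "(\<Sum>i<T. real i * x i) / D \<le> c * (real D + 1) ^ T"
    using weighted_sum_block_size_le D_pos by (simp add: x_def divide_le_eq algebra_simps)
  ultimately show ?thesis
    by linarith
qed

lemma card_edge_slots_pos: "card edge_slots > 0"
proof -
  have "(\<Sum>j<T. block_size j) > 0"
    using T_pos block_size_pos by (intro sum_pos) (auto simp: lessThan_empty_iff)
  then show ?thesis
    using D_pos by (simp add: card_edge_slots)
qed

lemma layer_size_pos: "layer_size 0 > 0"
  using D_pos c_pos by (simp add: layer_size_def)

lemma card_verts_pos: "card verts > 0"
  using layer_size_pos by (simp add: card_verts_eq_blocks)

lemma card_verts_le_top_block: "card verts \<le> (D + 1) ^ 2 * block_size (T - 1)"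
proof -
  have "card verts \<le> (D + 1) * ((\<Sum>j<T. block_size j) + layer_size 0)"
    by (simp add: card_verts_eq_blocks)
  also have "\<dots> = c * ((D + 1) * (D + 1) ^ T)"
    unfolding sum_block_size_add_layer_size by (rule mult.left_commute)
  also have "(D + 1) * (D + 1) ^ T = (D + 1) ^ 2 * (D + 1) ^ (T - 1)"
    using T_pos by (cases T) (simp_all add: power2_eq_square algebra_simps)
  finally show ?thesis
    by (simp add: block_size_def mult.left_commute)
qed

lemma card_matchings_pos: "card matchings > 0"
  by (simp add: card_matchings)

lemma ln_card_matchings_ge:
  "card edge_slots * ln (block_size (T - 1)) - 2 * card edge_slots - real D * (real D + 1) * layer_size 0
    \<le> ln (card matchings)"
proof -
  define d where "d = real D"
  have "real c * (d + 1) ^ T = real (\<Sum>j<T. block_size j) + layer_size 0"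
    using arg_cong[OF sum_block_size_add_layer_size, of real] by (simp add: d_def add.commute)
  then have "card edge_slots * ln (block_size (T - 1)) - 2 * card edge_slots - d * (d + 1) * layer_size 0
      = d * (d + 1) * ((\<Sum>j<T. block_size j) * ln (block_size (T - 1)) - c * (d + 1) ^ T - (\<Sum>j<T. block_size j))"
    by (simp add: d_def card_edge_slots algebra_simps)
  also have "\<dots> \<le> d * (d + 1) * (\<Sum>j<T. ln (fact (block_size j)))"
    using sum_ln_fact_block_size_ge by (intro mult_left_mono) (simp_all add: d_def)
  also have "\<dots> = ln (card matchings)"
    by (simp add: d_def card_matchings ln_prod ln_realpow sum_distrib_left algebra_simps)
  finally show ?thesis
    by (simp add: d_def)
qed

lemma ln_card_matchings_le:
  assumes count: "card matchings \<le> (m choose card edge_slots) * card verts ^ card verts"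
  shows "m > 0"
    and "ln (card matchings) + ln (fact (card edge_slots)) \<le> card edge_slots * ln m + card verts * ln (card verts)"
proof -
  let ?k = "card edge_slots" and ?N = "card verts"
  show m: "m > 0"
    using count card_matchings_pos card_edge_slots_pos by (cases m) (auto simp: binomial_eq_0)
  have "card matchings * fact ?k \<le> (m choose ?k) * fact ?k * ?N ^ ?N"
    using count by (simp add: algebra_simps)
  also have "\<dots> \<le> m ^ ?k * ?N ^ ?N"
    by (intro mult_right_mono binomial_fact_pow) simp
  finally have "real (card matchings * fact ?k) \<le> real (m ^ ?k * ?N ^ ?N)"
    by (simp only: of_nat_le_iff)
  then have "real (card matchings) * fact ?k \<le> real m ^ ?k * real ?N ^ ?N"
    by (simp only: of_nat_mult of_nat_power of_nat_fact)
  then have "ln (real (card matchings) * fact ?k) \<le> ln (real m ^ ?k * real ?N ^ ?N)"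
    using m card_matchings_pos card_verts_pos by simp
  then show "ln (card matchings) + ln (fact ?k) \<le> ?k * ln m + ?N * ln ?N"
    using m card_matchings_pos card_verts_pos by (simp add: ln_mult ln_realpow)
qed

lemma real_card_verts: "real (card verts) = layer_size 0 + card edge_slots / real D"
  using D_pos card_edge_slots_eq card_verts_eq_blocks by (simp add: field_simps)

lemma bottom_layer_le_edges:
  assumes "0 \<le> ln n" and bottom: "layer_size 0 * (ln n + (real D + 1) ^ 2) \<le> card verts"
  shows "layer_size 0 * (ln n + real D * (real D + 1)) \<le> card edge_slots"
proof -
  define d l0 where "d = real D" and "l0 = real (layer_size 0)"
  have d: "d \<ge> 1"
    using D_pos by (simp add: d_def)
  have "l0 * (ln n + (d + 1) ^ 2) = l0 * (ln n + d * (d + 1)) + d * l0 + l0"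
    by (simp add: power2_eq_square algebra_simps)
  moreover have "0 \<le> d * l0"
    using d by (simp add: l0_def)
  moreover have "l0 * (ln n + (d + 1) ^ 2) \<le> l0 + card edge_slots / d"
    using bottom real_card_verts by (simp add: d_def l0_def)
  ultimately have "l0 * (ln n + d * (d + 1)) \<le> card edge_slots / d"
    by linarith
  also have "\<dots> \<le> card edge_slots"
    using d by (simp add: divide_le_eq mult_le_cancel_left1)
  finally show ?thesis
    by (simp add: d_def l0_def)
qed

lemma ln_host_edges_ge:
  assumes count: "card matchings \<le> (m choose card edge_slots) * card verts ^ card verts"
    and fits: "card verts \<le> n"
    and bottom: "layer_size 0 * (ln n + (real D + 1) ^ 2) \<le> card verts"
  shows "ln (real (block_size (T - 1)) * card edge_slots) - 4 - ln n / D \<le> ln m"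
proof -
  define d k N l0 X where "d = real D" and "k = real (card edge_slots)" and "N = real (card verts)"
    and "l0 = real (layer_size 0)" and "X = real (block_size (T - 1))"
  have d: "d \<ge> 1" and k: "k > 0" and X: "X > 0" and N: "N = l0 + k / d"
    using D_pos card_edge_slots_pos block_size_pos real_card_verts
    by (simp_all add: d_def k_def X_def N_def l0_def)
  have n: "0 \<le> ln n" "N * ln N \<le> N * ln n"
    using fits card_verts_pos by (simp_all add: N_def mult_left_mono)
  have "k * ln X - 2 * k - d * (d + 1) * l0 + (k * ln k - k) \<le> k * ln m + N * ln N"
    using ln_card_matchings_ge ln_fact_ge[of "card edge_slots"] ln_card_matchings_le(2)[OF count]
    by (simp add: d_def k_def N_def l0_def X_def)
  moreover have "l0 * (ln n + d * (d + 1)) \<le> k"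
    using bottom_layer_le_edges[OF n(1) bottom] by (simp add: d_def k_def l0_def)
  ultimately have "k * (ln X + ln k - 4 - ln n / d) \<le> k * ln m"
    using n N by (simp add: algebra_simps)
  then show ?thesis
    using k X by (simp add: ln_mult k_def X_def d_def mult_le_cancel_left_pos)
qed

lemma card_verts_sq_le:
  assumes "4 * layer_size 0 \<le> card verts"
  shows "3 * real (card verts) ^ 2 \<le> 16 * real D * block_size (T - 1) * card edge_slots"
proof -
  define d N l0 X where "d = real D" and "N = real (card verts)" and "l0 = real (layer_size 0)"
    and "X = real (block_size (T - 1))"
  have d: "d \<ge> 1" and l0: "4 * l0 \<le> N" "0 \<le> l0"
    using D_pos assms by (simp_all add: d_def N_def l0_def)
  have k: "real (card edge_slots) = d * (N - l0)"
    using card_edge_slots_eq assms by (simp add: d_def N_def l0_def of_nat_diff)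
  have "N \<le> (d + 1) ^ 2 * X"
    using of_nat_mono[OF card_verts_le_top_block, where 'a = real] by (simp add: N_def X_def d_def add.commute)
  also have "\<dots> \<le> 4 * d ^ 2 * X"
  proof (rule mult_right_mono)
    have "d \<le> d * d"
      using d mult_left_mono[of 1 d d] by simp
    moreover have "(d + 1) ^ 2 = d * d + 2 * d + 1" "4 * d ^ 2 = 4 * (d * d)"
      by (simp_all add: power2_eq_square algebra_simps)
    ultimately show "(d + 1) ^ 2 \<le> 4 * d ^ 2"
      using d by linarith
  qed (simp add: X_def)
  finally have NX: "N \<le> 4 * d ^ 2 * X" .
  have "N * (4 * l0) \<le> N * N"
    using l0 by (intro mult_left_mono) simp_all
  then have "3 * N ^ 2 \<le> 4 * (N - l0) * N"
    by (simp add: power2_eq_square algebra_simps)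
  also have "\<dots> \<le> 4 * (N - l0) * (4 * d ^ 2 * X)"
    using NX l0 by (intro mult_left_mono) simp_all
  also have "\<dots> = 16 * d * X * (d * (N - l0))"
    by (simp add: power2_eq_square algebra_simps)
  finally show ?thesis
    by (simp add: N_def d_def X_def k)
qed

lemma four_layer_size_le:
  fixes n :: nat
  assumes "1 \<le> n" and bottom: "layer_size 0 * (ln n + (real D + 1) ^ 2) \<le> card verts"
  shows "4 * layer_size 0 \<le> card verts"
proof -
  have "0 \<le> ln (real n)" "(2::real) ^ 2 \<le> (real D + 1) ^ 2"
    using assms(1) D_pos by (simp, intro power_mono) simp_all
  then have four: "(4::real) \<le> ln n + (real D + 1) ^ 2"
    by simp
  have "4 * real (layer_size 0) \<le> real (layer_size 0) * (ln n + (real D + 1) ^ 2)"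
    using mult_left_mono[OF four, of "real (layer_size 0)"] by linarith
  then have "real (4 * layer_size 0) \<le> real (card verts)"
    using bottom by simp
  then show ?thesis
    by (simp only: of_nat_le_iff)
qed

lemma exp_four_mult_sq_le:
  assumes dense: "9 * n \<le> 10 * card verts" and thin: "4 * layer_size 0 \<le> card verts"
  shows "exp 4 * real n ^ 2 \<le> 1000 * real D * (real (block_size (T - 1)) * card edge_slots)"
proof -
  define P where "P = real (block_size (T - 1)) * card edge_slots"
  have "3 * real (card verts) ^ 2 \<le> 16 * (real D * P)"
    using card_verts_sq_le[OF thin] by (simp add: P_def algebra_simps)
  moreover have "0 \<le> real D * P"
    by (simp add: P_def)
  moreover have "(9 * real n) ^ 2 \<le> (10 * real (card verts)) ^ 2"
    using dense by (intro power_mono) simp_all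
  then have "81 * real n ^ 2 \<le> 100 * real (card verts) ^ 2"
    by (simp add: power_mult_distrib)
  moreover have "exp 4 \<le> (81::real)"
    using power_mono[OF exp_le, of 4] by (simp add: exp_of_nat_mult[symmetric])
  then have "exp 4 * real n ^ 2 \<le> 81 * real n ^ 2"
    by (intro mult_right_mono) simp_all
  ultimately show ?thesis
    unfolding P_def[symmetric] by linarith
qed

lemma host_edges_ge:
  assumes count: "card matchings \<le> (m choose card edge_slots) * card verts ^ card verts"
    and fits: "card verts \<le> n" and dense: "9 * n \<le> 10 * card verts"
    and bottom: "layer_size 0 * (ln n + (real D + 1) ^ 2) \<le> card verts"
  shows "1 / (1000 * real D) * real n powr (2 - 1 / real D) \<le> m"
proof -
  define d P where "d = real D" and "P = real (block_size (T - 1)) * card edge_slots"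
  have d: "d \<ge> 1" and m: "m > 0" and P: "P > 0" and n: "1 \<le> n"
    using D_pos ln_card_matchings_le(1)[OF count] block_size_pos card_edge_slots_pos card_verts_pos fits
    by (simp_all add: d_def P_def)
  have "ln (exp 4 * real n ^ 2) \<le> ln (1000 * d * P)"
    using exp_four_mult_sq_le[OF dense four_layer_size_le[OF n bottom]] n
    by (intro ln_mono) (simp_all add: d_def P_def)
  then have "4 + 2 * ln n \<le> ln (1000 * d) + ln P"
    using n d P by (simp add: ln_mult ln_realpow)
  then have "ln (1 / (1000 * d) * n powr (2 - 1 / d)) \<le> ln m"
    using ln_host_edges_ge[OF count fits bottom] n d by (simp add: ln_mult ln_div P_def d_def algebra_simps)
  then show ?thesis
    using n d m by (simp add: d_def)
qed
end

lemma universal_host_edges_ge: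
  assumes D: "D \<ge> 1" and T: "T \<ge> 1" and big: "10 * layered_order D T \<le> n"
    and bottom: "real D ^ T * (ln n + (real D + 1) ^ 2) \<le> layered_order D T"
    and host: "simple_graph V E"
    and universal: "degenerate_universal D n V E"
  shows "1 / (1000 * real D) * real n powr (2 - 1 / real D) \<le> card E"
proof -
  define Q c where "Q = layered_order D T" and "c = n div Q"
  have "1 \<le> (D + 1) ^ T"
    by simp
  then have Q: "Q \<ge> 1"
    using layered_order_ge[of D T] unfolding Q_def by linarith
  moreover have "Q div Q \<le> c"
    using big unfolding c_def Q_def by (intro div_le_mono) simp
  ultimately have c: "c \<ge> 1"
    by simp
  interpret sized_layered_graph D T c
    using D T c by unfold_locales
  have N: "card verts = c * Q"
    by (simp add: card_verts Q_def)
  have "n = c * Q + n mod Q" "n mod Q < Q"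
    using Q by (simp_all add: c_def)
  then have fits: "card verts \<le> n" and dense: "9 * n \<le> 10 * card verts"
    using big by (simp_all add: N Q_def)
  have "layer_size 0 * (ln n + (real D + 1) ^ 2) = c * (real D ^ T * (ln n + (real D + 1) ^ 2))"
    by (simp add: layer_size_def)
  also have "\<dots> \<le> card verts"
    using bottom by (simp add: N Q_def mult_left_mono)
  finally show ?thesis
    using host_edges_ge[OF card_matchings_le[OF host fits universal] fits dense] by simp
qed

section \<open>Choice of the parameters\<close>

lemma real_layered_order_le: "real (layered_order D T) \<le> (real D + 1) * (real D + 1) ^ T"
proof -
  have "layered_order D T \<le> (D + 1) ^ Suc T"
    by (metis layered_order_add_power le_add1)
  then have "real (layered_order D T) \<le> real ((D + 1) ^ Suc T)"
    by (simp only: of_nat_le_iff)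
  then show ?thesis
    by (simp only: of_nat_mult of_nat_power of_nat_add of_nat_1 power_Suc)
qed

lemma layered_order_fits:
  assumes "(real D + 1) ^ T \<le> sqrt n" and "10 * (real D + 1) \<le> sqrt n"
  shows "10 * layered_order D T \<le> n"
proof -
  have "10 * real (layered_order D T) \<le> 10 * ((real D + 1) * (real D + 1) ^ T)"
    using real_layered_order_le[of D T] by (rule mult_left_mono) simp
  also have "\<dots> = 10 * (real D + 1) * (real D + 1) ^ T"
    by (rule mult.assoc[symmetric])
  also have "\<dots> \<le> sqrt n * sqrt n"
    using assms by (intro mult_mono) simp_all
  finally show ?thesis
    by simp
qed

lemma power_mult_le_layered_order:
  assumes "D \<ge> 1" and "L \<le> (1 + 1 / real D) ^ T"
  shows "real D ^ T * L \<le> layered_order D T"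
proof -
  have "real D ^ T * L \<le> real D ^ T * (1 + 1 / real D) ^ T"
    using assms by (intro mult_left_mono) simp_all
  also have "\<dots> = (real D + 1) ^ T"
    using assms(1) by (simp add: power_mult_distrib[symmetric] field_simps)
  also have "\<dots> \<le> layered_order D T"
    using of_nat_mono[OF layered_order_ge[of D T], where 'a = real]
    by (simp only: of_nat_power of_nat_add of_nat_1)
  finally show ?thesis .
qed

lemma layered_depth_exists:
  fixes n :: nat
  assumes D: "D \<ge> 1" and big: "100 * (real D + 1) ^ 2 \<le> n"
    and grow: "ln n + (real D + 1) ^ 2 \<le> exp ((ln n / (2 * ln (real D + 1)) - 1) * ln (1 + 1 / real D))"
  shows "\<exists>T\<ge>1. 10 * layered_order D T \<le> n \<and> real D ^ T * (ln n + (real D + 1) ^ 2) \<le> layered_order D T"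
proof -
  define d a T where "d = real D" and "a = 2 * ln (d + 1)" and "T = nat \<lfloor>ln n / a\<rfloor>"
  have d: "d \<ge> 1" and a: "a > 0" and sq: "1 < (d + 1) ^ 2"
    using D by (simp_all add: d_def a_def one_less_power)
  have n: "1 \<le> real n" "0 \<le> ln n"
    using big sq unfolding d_def by simp_all
  then have T: "real T \<le> ln n / a" "ln n / a - 1 \<le> real T"
    using a by (simp_all add: T_def)
  have "(d + 1) ^ T = exp (real T * ln (d + 1))"
    using d by (simp add: exp_of_nat_mult)
  also have "\<dots> \<le> exp (ln n / 2)"
    using T a by (simp add: a_def field_simps)
  also have "\<dots> = sqrt n"
    using n by (simp add: powr_half_sqrt[symmetric] powr_def)
  finally have "(d + 1) ^ T \<le> sqrt n" .
  moreover have "10 * (d + 1) \<le> sqrt n"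
    using big by (intro real_le_rsqrt) (simp only: d_def power_mult_distrib, simp)
  ultimately have fits: "10 * layered_order D T \<le> n"
    unfolding d_def by (rule layered_order_fits)
  have "exp ((ln n / a - 1) * ln (1 + 1 / d)) \<le> exp (real T * ln (1 + 1 / d))"
    using T d by (simp add: mult_right_mono)
  also have "\<dots> = (1 + 1 / d) ^ T"
    using d by (simp add: exp_of_nat_mult add_pos_nonneg)
  finally have bottom: "real D ^ T * (ln n + (real D + 1) ^ 2) \<le> layered_order D T"
    using grow D by (intro power_mult_le_layered_order) (simp_all add: d_def a_def)
  moreover have "T \<noteq> 0"
  proof
    assume "T = 0"
    then have "ln n + (d + 1) ^ 2 \<le> 1"
      using bottom by (simp add: d_def layered_order_def)
    with sq n show False
      by linarith
  qed
  ultimately show ?thesis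
    using fits by (intro exI[of _ T]) simp
qed

lemma eventually_layered_depth:
  assumes D: "D \<ge> 1"
  shows "\<forall>\<^sub>F n in sequentially. \<exists>T\<ge>1. 10 * layered_order D T \<le> n
    \<and> real D ^ T * (ln n + (real D + 1) ^ 2) \<le> layered_order D T"
proof -
  have "ln (1 + 1 / real D) > 0" "2 * ln (real D + 1) > 0"
    using D by (simp_all add: ln_gt_zero)
  \<comment> \<open>a lower bound for (1 + 1/D)^T at the depth T = floor (ln n / (2 ln (D + 1))); it is a power of n\<close>
  then have "\<forall>\<^sub>F n in sequentially. 100 * (real D + 1) ^ 2 \<le> real n \<and> ln (real n) + (real D + 1) ^ 2
      \<le> exp ((ln (real n) / (2 * ln (real D + 1)) - 1) * ln (1 + 1 / real D))"
    by (intro eventually_conj) real_asymp+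
  then show ?thesis
    by (rule eventually_mono) (use layered_depth_exists[OF D] in blast)
qed

theorem theorem1p2:
  fixes D :: nat
  assumes "D \<ge> 1"
  shows "\<exists>n0::nat. \<forall>n\<ge>n0. \<forall>(V :: nat set) (E :: nat set set).
           simple_graph V E \<and>
           (\<forall>EH :: nat set set. simple_graph {0..<n} EH \<and> degenerate D {0..<n} EH
               \<and> max_degree_le (2 * D + 1) {0..<n} EH
               \<longrightarrow> contains_subgraph V E {0..<n} EH)
           \<longrightarrow> real (num_edges E) \<ge> 1 / (1000 * real D) * real n powr (2 - 1 / real D)"
proof -
  obtain n0 where "\<And>n. n \<ge> n0 \<Longrightarrow> \<exists>T\<ge>1. 10 * layered_order D T \<le> n
      \<and> real D ^ T * (ln n + (real D + 1) ^ 2) \<le> layered_order D T"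
    using eventually_layered_depth[OF assms] unfolding eventually_sequentially by blast
  then have "1 / (1000 * real D) * real n powr (2 - 1 / real D) \<le> card E"
    if "n \<ge> n0" "simple_graph V E" "degenerate_universal D n V E" for n and V :: "nat set" and E :: "nat set set"
    using that universal_host_edges_ge[OF assms] by meson
  then show ?thesis
    by (intro exI[of _ n0] allI impI, elim conjE) (simp add: num_edges_def degenerate_universal_def)
qed

end
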